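(* Let $d>0$ and let $p\in\mathbb R[x_1,\dots,x_n]$ have degree $d$ and satisfy $p(x)=1$ whenever $\sum_{j=1}^n x_j=1$. Then $p$ has at least $n$ distinct monomials of degree $d$ (with nonzero coefficients). *)

theory Defs
  imports Complex_Main "HOL-Library.Poly_Mapping"
begin

(* Multivariate real polynomials: finitely supported maps from monomials
   (exponent vectors nat =>0 nat) to real coefficients; keys = monomials with nonzero coefficient. *)

type_synonym mpoly_r = "(nat \<Rightarrow>\<^sub>0 nat) \<Rightarrow>\<^sub>0 real"

definition mon_deg :: "(nat \<Rightarrow>\<^sub>0 nat) \<Rightarrow> nat" where
  "mon_deg m = (\<Sum>i\<in>Poly_Mapping.keys m. Poly_Mapping.lookup m i)"

definition vars_in :: "mpoly_r \<Rightarrow> nat \<Rightarrow> bool" where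
  "vars_in p n \<longleftrightarrow> (\<forall>m\<in>Poly_Mapping.keys p. Poly_Mapping.keys m \<subseteq> {..<n})"

definition total_deg :: "mpoly_r \<Rightarrow> nat" where
  "total_deg p = (if p = 0 then 0 else Max (mon_deg ` Poly_Mapping.keys p))"

definition eval_mp :: "mpoly_r \<Rightarrow> (nat \<Rightarrow> real) \<Rightarrow> real" where
  "eval_mp p x = (\<Sum>m\<in>Poly_Mapping.keys p. Poly_Mapping.lookup p m * (\<Prod>i\<in>Poly_Mapping.keys m. x i ^ Poly_Mapping.lookup m i))"

end

(*
  The top-degree part p_d of p vanishes on the hyperplane x_1 + ... + x_n = 0: homogenising,
  t^d p(w/t) = t^d whenever the coordinates of w sum to t, and letting t tend to 0 leaves p_d(w) = 0.

  A polynomial with nonzero coefficients vanishing on the hyperplane sum_(i in V) x_i = 0 has at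
  least |V| monomials, by induction on V. If the exponent of some x_j is not the same in all
  monomials, those of least x_j-degree form a proper nonempty subfamily which, with x_j deleted,
  vanishes on the hyperplane of V - {j}: along the line x_j = t, x_l = y_l - t inside the
  hyperplane they are the lowest-order terms in t. Otherwise the polynomial is a single monomial,
  which does not vanish at a point of the hyperplane with all coordinates nonzero.
*)
theory Submission
  imports Defs
begin

lemma isCont_eq_0_if_eq_0_off:
  fixes h :: "'a::{perfect_space,t2_space} \<Rightarrow> 'b::{t2_space,zero}"
  assumes "isCont h a" and "\<And>t. t \<noteq> a \<Longrightarrow> h t = 0"
  shows "h a = 0"
proof -
  have "(h \<longlongrightarrow> 0) (at a)"
    by (rule tendsto_eventually) (auto simp: eventually_at_filter assms(2))
  with assms(1) show ?thesis
    by (auto simp: isCont_def intro: LIM_unique)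
qed

lemma lowest_order_coeff_eq_0:
  fixes P :: "'a \<Rightarrow> real \<Rightarrow> real" and e :: "'a \<Rightarrow> nat"
  assumes "finite K" and "\<And>k. k \<in> K \<Longrightarrow> isCont (P k) 0" and "\<And>k. k \<in> K \<Longrightarrow> a \<le> e k"
    and "\<And>t. t \<noteq> 0 \<Longrightarrow> (\<Sum>k\<in>K. P k t * t ^ e k) = 0"
  shows "(\<Sum>k\<in>{k\<in>K. e k = a}. P k 0) = 0"
proof -
  define G where "G t = (\<Sum>k\<in>K. P k t * t ^ (e k - a))" for t
  have "isCont G 0"
    unfolding G_def using assms(2) by (auto intro!: continuous_intros)
  moreover have "G t = 0" if "t \<noteq> 0" for t
  proof -
    have "t ^ a * G t = (\<Sum>k\<in>K. P k t * t ^ e k)"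
      unfolding G_def sum_distrib_left
      by (rule sum.cong) (simp_all add: assms(3) mult_ac flip: power_add)
    with assms(4) that show ?thesis by simp
  qed
  ultimately have "G 0 = 0" by (rule isCont_eq_0_if_eq_0_off)
  moreover have "G 0 = (\<Sum>k\<in>{k\<in>K. e k = a}. P k 0)"
    unfolding G_def using assms(1,3)
    by (auto simp: sum.inter_filter power_0_left le_antisym intro!: sum.cong)
  ultimately show ?thesis by simp
qed

lemma ex_zero_sum_nonzero_components:
  assumes "finite V" and "card V \<ge> 2"
  obtains x :: "'v \<Rightarrow> real" where "(\<Sum>i\<in>V. x i) = 0" and "\<And>i. i \<in> V \<Longrightarrow> x i \<noteq> 0"
proof -
  from assms obtain l where l: "l \<in> V" by fastforce
  define x :: "'v \<Rightarrow> real" where "x = (\<lambda>_. 1)(l := 1 - real (card V))"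
  have "(\<Sum>i\<in>V. x i) = x l + (\<Sum>i\<in>V - {l}. x i)"
    using assms(1) l by (simp add: sum.remove)
  also have "\<dots> = 0"
    using assms l by (simp add: x_def)
  finally show ?thesis
    using that assms(2) by (fastforce simp: x_def)
qed

lemma lowest_power_part_vanishes_on_hyperplane:
  fixes V :: "'v set" and K :: "'a set" and c :: "'a \<Rightarrow> real" and e :: "'a \<Rightarrow> 'v \<Rightarrow> nat"
  assumes "finite V" and "finite K" and "j \<in> V" and "card V \<ge> 2"
    and "\<And>k. k \<in> K \<Longrightarrow> a \<le> e k j"
    and "\<And>x. (\<Sum>i\<in>V. x i) = 0 \<Longrightarrow> (\<Sum>k\<in>K. c k * (\<Prod>i\<in>V. x i ^ e k i)) = 0"
    and "(\<Sum>i\<in>V - {j}. y i) = 0"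
  shows "(\<Sum>k\<in>{k\<in>K. e k j = a}. c k * (\<Prod>i\<in>V - {j}. y i ^ e k i)) = 0"
proof -
  have "card (V - {j}) \<noteq> 0"
    using assms(1,3,4) by simp
  then obtain l where "l \<in> V - {j}"
    by (metis card.empty ex_in_conv)
  define P where "P k = (\<lambda>t. c k * (\<Prod>i\<in>V - {j}. (y i - of_bool (i = l) * t) ^ e k i))" for k
  have "(\<Sum>k\<in>{k\<in>K. e k j = a}. P k 0) = 0"
  proof (rule lowest_order_coeff_eq_0[where P = P and e = "\<lambda>k. e k j"])
    fix t :: real assume "t \<noteq> 0"
    define x where "x i = (if i = j then t else y i - of_bool (i = l) * t)" for i
    have "(\<Sum>i\<in>V. x i) = t + (\<Sum>i\<in>V - {j}. y i - of_bool (i = l) * t)"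
      using assms(1,3) by (simp add: x_def sum.remove)
    also have "\<dots> = 0"
      using assms(1,7) \<open>l \<in> V - {j}\<close> by (simp add: sum_subtractf)
    finally have "(\<Sum>k\<in>K. c k * (\<Prod>i\<in>V. x i ^ e k i)) = 0"
      by (rule assms(6))
    moreover have "c k * (\<Prod>i\<in>V. x i ^ e k i) = P k t * t ^ e k j" for k
      using assms(1,3) by (simp add: P_def x_def prod.remove mult_ac)
    ultimately show "(\<Sum>k\<in>K. P k t * t ^ e k j) = 0" by simp
  next
    show "isCont (P k) 0" for k
      unfolding P_def by (intro continuous_intros)
  qed (simp_all add: assms(2,5))
  then show ?thesis by (simp add: P_def)
qed

lemma ex_nonconstant_exponent_if_vanishing_on_hyperplane:
  fixes V :: "'v set" and K :: "'a set" and c :: "'a \<Rightarrow> real" and e :: "'a \<Rightarrow> 'v \<Rightarrow> nat"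
  assumes "finite V" and "card V \<ge> 2" and "K \<noteq> {}" and "inj_on e K"
    and "\<And>k i. k \<in> K \<Longrightarrow> i \<notin> V \<Longrightarrow> e k i = 0" and "\<And>k. k \<in> K \<Longrightarrow> c k \<noteq> 0"
    and "\<And>x. (\<Sum>i\<in>V. x i) = 0 \<Longrightarrow> (\<Sum>k\<in>K. c k * (\<Prod>i\<in>V. x i ^ e k i)) = 0"
  shows "\<exists>j\<in>V. \<exists>k\<in>K. \<exists>k'\<in>K. e k j \<noteq> e k' j"
proof (rule ccontr)
  assume same_exponents: "\<not> ?thesis"
  from assms(3) obtain k0 where k0: "k0 \<in> K" by blast
  have "K = {k0}"
  proof (intro set_eqI iffI)
    fix k assume k: "k \<in> K"
    have "e k = e k0"
    proof
      fix i show "e k i = e k0 i"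
        using same_exponents k k0 assms(5)[of k i] assms(5)[of k0 i]
        by (cases "i \<in> V") (blast, simp)
    qed
    with k k0 assms(4) show "k \<in> {k0}" by (auto dest: inj_onD)
  qed (use k0 in simp)
  obtain x :: "'v \<Rightarrow> real" where x: "(\<Sum>i\<in>V. x i) = 0" "\<And>i. i \<in> V \<Longrightarrow> x i \<noteq> 0"
    using ex_zero_sum_nonzero_components assms(1,2) by blast
  have "c k0 * (\<Prod>i\<in>V. x i ^ e k0 i) = 0"
    using assms(7)[OF x(1)] \<open>K = {k0}\<close> by simp
  moreover have "c k0 * (\<Prod>i\<in>V. x i ^ e k0 i) \<noteq> 0"
    using assms(1,6) k0 x(2) by simp
  ultimately show False by contradiction
qed

lemma card_vars_le_card_monomials:
  fixes V :: "'v set" and K :: "'a set" and c :: "'a \<Rightarrow> real" and e :: "'a \<Rightarrow> 'v \<Rightarrow> nat"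
  assumes "finite V" and "finite K" and "K \<noteq> {}" and "inj_on e K"
    and "\<And>k i. k \<in> K \<Longrightarrow> i \<notin> V \<Longrightarrow> e k i = 0" and "\<And>k. k \<in> K \<Longrightarrow> c k \<noteq> 0"
    and "\<And>x. (\<Sum>i\<in>V. x i) = 0 \<Longrightarrow> (\<Sum>k\<in>K. c k * (\<Prod>i\<in>V. x i ^ e k i)) = 0"
  shows "card V \<le> card K"
  using assms
proof (induction V arbitrary: K e rule: finite_psubset_induct)
  case (psubset V)
  show ?case
  proof (cases "card V \<le> 1")
    case True
    moreover have "1 \<le> card K"
      using psubset.prems(1,2) by (simp add: Suc_le_eq card_gt_0_iff)
    ultimately show ?thesis by linarith
  next
    case False
    then have "card V \<ge> 2" by simp
    then obtain j k k' where "j \<in> V" "k \<in> K" "k' \<in> K" "e k j \<noteq> e k' j"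
      using ex_nonconstant_exponent_if_vanishing_on_hyperplane[OF psubset.hyps \<open>card V \<ge> 2\<close>
          psubset.prems(2-6)]
      by blast
    define a where "a = Min ((\<lambda>k. e k j) ` K)"
    define Ka where "Ka = {k\<in>K. e k j = a}"
    have a_le: "a \<le> e k j" if "k \<in> K" for k
      unfolding a_def using psubset.prems(1) that by simp
    have "a \<in> (\<lambda>k. e k j) ` K"
      unfolding a_def using psubset.prems(1,2) by (intro Min_in) auto
    then have "Ka \<noteq> {}" by (auto simp: Ka_def)
    have "Ka \<subset> K"
      using \<open>k \<in> K\<close> \<open>k' \<in> K\<close> \<open>e k j \<noteq> e k' j\<close> unfolding Ka_def
      by (metis (mono_tags, lifting) mem_Collect_eq psubsetI subsetI)
    have "card (V - {j}) \<le> card Ka"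
    proof (rule psubset.IH[of "V - {j}" Ka "\<lambda>k. (e k)(j := 0)"])
      show "V - {j} \<subset> V" using \<open>j \<in> V\<close> by blast
      show "finite Ka" using psubset.prems(1) by (simp add: Ka_def)
      show "Ka \<noteq> {}" by fact
      show "inj_on (\<lambda>k. (e k)(j := 0)) Ka"
      proof (rule inj_onI)
        fix k k' assume "k \<in> Ka" "k' \<in> Ka" "(e k)(j := 0) = (e k')(j := 0)"
        then have "e k = e k'"
          unfolding Ka_def by (metis (mono_tags, lifting) fun_upd_triv fun_upd_upd mem_Collect_eq)
        with \<open>k \<in> Ka\<close> \<open>k' \<in> Ka\<close> psubset.prems(3) show "k = k'"
          by (auto simp: Ka_def dest: inj_onD)
      qed
      show "((e k)(j := 0)) i = 0" if "k \<in> Ka" "i \<notin> V - {j}" for k i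
        using that psubset.prems(4) by (auto simp: Ka_def)
      show "c k \<noteq> 0" if "k \<in> Ka" for k
        using that psubset.prems(5) by (simp add: Ka_def)
      show "(\<Sum>k\<in>Ka. c k * (\<Prod>i\<in>V - {j}. y i ^ ((e k)(j := 0)) i)) = 0"
        if "(\<Sum>i\<in>V - {j}. y i) = 0" for y
        using lowest_power_part_vanishes_on_hyperplane[OF psubset.hyps psubset.prems(1) \<open>j \<in> V\<close>
            \<open>card V \<ge> 2\<close> a_le psubset.prems(6) that]
        by (simp add: Ka_def)
    qed
    then show ?thesis
      using psubset.hyps psubset.prems(1) \<open>j \<in> V\<close> \<open>Ka \<subset> K\<close> psubset_card_mono[of K Ka]
      by simp
  qed
qed

lemma top_degree_part_vanishes_on_hyperplane:
  fixes V :: "'v set" and K :: "'a set" and c :: "'a \<Rightarrow> real" and e :: "'a \<Rightarrow> 'v \<Rightarrow> nat"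
  assumes "finite V" and "finite K" and "d > 0"
    and "\<And>k. k \<in> K \<Longrightarrow> (\<Sum>i\<in>V. e k i) \<le> d"
    and "\<And>x. (\<Sum>i\<in>V. x i) = 1 \<Longrightarrow> (\<Sum>k\<in>K. c k * (\<Prod>i\<in>V. x i ^ e k i)) = 1"
    and "(\<Sum>i\<in>V. z i) = 0"
  shows "(\<Sum>k\<in>{k\<in>K. (\<Sum>i\<in>V. e k i) = d}. c k * (\<Prod>i\<in>V. z i ^ e k i)) = 0"
proof (cases "V = {}")
  case True
  with assms(3) show ?thesis by simp
next
  case False
  then obtain j where "j \<in> V" by blast
  define w where "w t = (\<lambda>i. z i + of_bool (i = j) * t)" for t :: real
  define H where
    "H t = (\<Sum>k\<in>K. c k * (\<Prod>i\<in>V. w t i ^ e k i) * t ^ (d - (\<Sum>i\<in>V. e k i))) - t ^ d" for t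
  have "isCont H 0"
    unfolding H_def w_def by (intro continuous_intros)
  moreover have "H t = 0" if "t \<noteq> 0" for t
  proof -
    have "(\<Sum>i\<in>V. w t i) = t"
      using assms(1,6) \<open>j \<in> V\<close> by (simp add: w_def sum.distrib)
    then have "(\<Sum>i\<in>V. w t i / t) = 1"
      using that by (simp flip: sum_divide_distrib)
    then have "t ^ d = t ^ d * (\<Sum>k\<in>K. c k * (\<Prod>i\<in>V. (w t i / t) ^ e k i))"
      by (simp add: assms(5))
    also have "\<dots> = (\<Sum>k\<in>K. c k * (\<Prod>i\<in>V. w t i ^ e k i) * t ^ (d - (\<Sum>i\<in>V. e k i)))"
      unfolding sum_distrib_left
    proof (rule sum.cong)
      fix k assume "k \<in> K"
      have "(\<Prod>i\<in>V. (w t i / t) ^ e k i) = (\<Prod>i\<in>V. w t i ^ e k i) / t ^ (\<Sum>i\<in>V. e k i)"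
        by (simp add: power_divide prod_dividef power_sum)
      moreover have "t ^ d = t ^ (d - (\<Sum>i\<in>V. e k i)) * t ^ (\<Sum>i\<in>V. e k i)"
        using assms(4)[OF \<open>k \<in> K\<close>] by (simp flip: power_add)
      ultimately show "t ^ d * (c k * (\<Prod>i\<in>V. (w t i / t) ^ e k i)) =
          c k * (\<Prod>i\<in>V. w t i ^ e k i) * t ^ (d - (\<Sum>i\<in>V. e k i))"
        using that by simp
    qed simp
    finally show ?thesis by (simp add: H_def)
  qed
  ultimately have "H 0 = 0" by (rule isCont_eq_0_if_eq_0_off)
  moreover have "H 0 = (\<Sum>k\<in>{k\<in>K. (\<Sum>i\<in>V. e k i) = d}. c k * (\<Prod>i\<in>V. z i ^ e k i))"
    using assms(2,3,4) unfolding H_def w_def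
    by (auto simp: sum.inter_filter power_0_left le_antisym intro!: sum.cong)
  ultimately show ?thesis by simp
qed

lemma mon_deg_eq_sum:
  assumes "finite V" and "Poly_Mapping.keys m \<subseteq> V"
  shows "mon_deg m = (\<Sum>i\<in>V. Poly_Mapping.lookup m i)"
  unfolding mon_deg_def using assms
  by (intro sum.mono_neutral_left) (auto simp: in_keys_iff)

lemma vars_inD: "vars_in p n \<Longrightarrow> m \<in> Poly_Mapping.keys p \<Longrightarrow> Poly_Mapping.keys m \<subseteq> {..<n}"
  by (simp add: vars_in_def)

lemma lookup_eq_0_if_vars_in:
  assumes "vars_in p n" and "m \<in> Poly_Mapping.keys p" and "i \<notin> {..<n}"
  shows "Poly_Mapping.lookup m i = 0"
proof -
  have "i \<notin> Poly_Mapping.keys m" using vars_inD[OF assms(1,2)] assms(3) by blast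
  then show ?thesis by (simp add: in_keys_iff)
qed

lemma eval_mp_eq_sum_prod:
  assumes "vars_in p n"
  shows "eval_mp p x =
    (\<Sum>m\<in>Poly_Mapping.keys p. Poly_Mapping.lookup p m * (\<Prod>i<n. x i ^ Poly_Mapping.lookup m i))"
  unfolding eval_mp_def
proof (intro sum.cong refl arg_cong2[where f = times])
  fix m assume "m \<in> Poly_Mapping.keys p"
  then show "(\<Prod>i\<in>Poly_Mapping.keys m. x i ^ Poly_Mapping.lookup m i) =
      (\<Prod>i<n. x i ^ Poly_Mapping.lookup m i)"
    using vars_inD[OF assms] by (intro prod.mono_neutral_left) (auto simp: in_keys_iff)
qed

lemma mon_deg_le_total_deg: "m \<in> Poly_Mapping.keys p \<Longrightarrow> mon_deg m \<le> total_deg p"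
  by (auto simp: total_deg_def)

lemma ex_mon_deg_eq_total_deg:
  "p \<noteq> 0 \<Longrightarrow> \<exists>m\<in>Poly_Mapping.keys p. mon_deg m = total_deg p"
  unfolding total_deg_def
  by (metis (mono_tags, lifting) Max_in finite_imageI finite_keys imageE image_is_empty keys_eq_empty)

lemma top_degree_part_of_mpoly_vanishes_on_hyperplane:
  assumes "d > 0" and "vars_in p n" and "total_deg p = d"
    and "\<forall>x :: nat \<Rightarrow> real. (\<Sum>j<n. x j) = 1 \<longrightarrow> eval_mp p x = 1"
    and "(\<Sum>i<n. z i) = 0"
  shows "(\<Sum>m\<in>{m \<in> Poly_Mapping.keys p. mon_deg m = d}.
      Poly_Mapping.lookup p m * (\<Prod>i<n. z i ^ Poly_Mapping.lookup m i)) = 0"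
proof -
  have deg: "mon_deg m = (\<Sum>i<n. Poly_Mapping.lookup m i)" if "m \<in> Poly_Mapping.keys p" for m
    using vars_inD[OF assms(2) that] by (simp add: mon_deg_eq_sum)
  have "(\<Sum>i<n. Poly_Mapping.lookup m i) \<le> d" if "m \<in> Poly_Mapping.keys p" for m
    using mon_deg_le_total_deg[OF that] assms(3) deg[OF that] by simp
  then show ?thesis
    using top_degree_part_vanishes_on_hyperplane[of "{..<n}" "Poly_Mapping.keys p" d
        Poly_Mapping.lookup "Poly_Mapping.lookup p" z] assms(1,4,5)
    by (simp add: deg eval_mp_eq_sum_prod[OF assms(2)] cong: conj_cong)
qed

theorem corollary1:
  fixes p :: mpoly_r and n d :: nat
  assumes "d > 0"
    and "vars_in p n"
    and "p \<noteq> 0"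
    and "total_deg p = d"
    and "\<forall>x :: nat \<Rightarrow> real. (\<Sum>j<n. x j) = 1 \<longrightarrow> eval_mp p x = 1"
  shows "card {m \<in> Poly_Mapping.keys p. mon_deg m = d} \<ge> n"
proof -
  let ?Kd = "{m \<in> Poly_Mapping.keys p. mon_deg m = d}"
  have "?Kd \<noteq> {}"
    using ex_mon_deg_eq_total_deg assms(3,4) by auto
  moreover have "inj_on Poly_Mapping.lookup ?Kd"
    by (rule inj_onI) (simp add: lookup_inject)
  moreover have "Poly_Mapping.lookup m i = 0" if "m \<in> ?Kd" and "i \<notin> {..<n}" for m i
    using lookup_eq_0_if_vars_in assms(2) that by blast
  moreover have "Poly_Mapping.lookup p m \<noteq> 0" if "m \<in> ?Kd" for m
    using that by (simp add: in_keys_iff)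
  ultimately have "card {..<n} \<le> card ?Kd"
    by (intro card_vars_le_card_monomials[OF _ _ _ _ _ _
          top_degree_part_of_mpoly_vanishes_on_hyperplane[OF assms(1,2,4,5)]])
      simp_all
  then show ?thesis by simp
qed

end
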